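(* For each $N\ge1$ let $\eta^N(t)$ be an irreducible continuous-time Markov chain on a finite set $\Omega_N$ with jump rates $R_N(\eta,\xi)$ and unique stationary distribution $\nu_N$; let $A_N\subset\Omega_N$ with $\lim_N\nu_N(A_N)=0$ and $H_N=\inf\{t>0:\eta^N(t)\in A_N\}$. Assume $T^{\rm mix}_N\ll r_N(A_N^c,A_N)^{-1}$, and let $\theta_N=\inf\{t>0:\mathbb P_{\nu_N}[H_N>t]<e^{-1}\}$. Then, under $\mathbb P_{\nu_N}$, $H_N/\theta_N$ converges in distribution to a mean one exponential random variable.
   Context: $T^{\rm mix}_N=\inf\{t>0:\max_{\eta}\|P_t(\eta,\cdot)-\nu_N\|_{\rm TV}\le1/4\}$ where $P_t(\eta,\xi)=\mathbb P_\eta[\eta^N(t)=\xi]$. $R_N(\xi,A_N)=\sum_{\zeta\in A_N}R_N(\xi,\zeta)$, $r_N(A_N^c,A_N)=\frac1{\nu_N(A_N^c)}\sum_{\xi\in A_N^c}\nu_N(\xi)R_N(\xi,A_N)$. $a_N\ll b_N$ means $a_N/b_N\to0$. $\mathbb P_{\nu_N}$ is the law of the chain started from $\nu_N$. *)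

theory Defs
  imports "HOL-Analysis.Analysis"
begin

text \<open>Finite-state continuous-time Markov chains, described analytically through
  their jump rates.  States live in a type 'a; the state space is a finite set Om.\<close>

definition valid_rates :: "'a set \<Rightarrow> ('a \<Rightarrow> 'a \<Rightarrow> real) \<Rightarrow> bool" where
  "valid_rates Om R \<longleftrightarrow> finite Om \<and> Om \<noteq> {} \<and>
     (\<forall>x\<in>Om. \<forall>y\<in>Om. x \<noteq> y \<longrightarrow> 0 \<le> R x y)"

definition jump_rel :: "'a set \<Rightarrow> ('a \<Rightarrow> 'a \<Rightarrow> real) \<Rightarrow> ('a \<times> 'a) set" where
  "jump_rel Om R = {(x, y). x \<in> Om \<and> y \<in> Om \<and> x \<noteq> y \<and> 0 < R x y}"

definition irreducible_chain :: "'a set \<Rightarrow> ('a \<Rightarrow> 'a \<Rightarrow> real) \<Rightarrow> bool" where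
  "irreducible_chain Om R \<longleftrightarrow> (\<forall>x\<in>Om. \<forall>y\<in>Om. (x, y) \<in> (jump_rel Om R)\<^sup>*)"

definition generator :: "'a set \<Rightarrow> ('a \<Rightarrow> 'a \<Rightarrow> real) \<Rightarrow> 'a \<Rightarrow> 'a \<Rightarrow> real" where
  "generator Om R x y = (if x = y then - (\<Sum>z\<in>Om - {x}. R x z) else R x y)"

fun mpow :: "'a set \<Rightarrow> ('a \<Rightarrow> 'a \<Rightarrow> real) \<Rightarrow> nat \<Rightarrow> 'a \<Rightarrow> 'a \<Rightarrow> real" where
  "mpow S Q 0 = (\<lambda>x y. if x = y then 1 else 0)"
| "mpow S Q (Suc k) = (\<lambda>x y. \<Sum>z\<in>S. Q x z * mpow S Q k z y)"

definition mexp :: "'a set \<Rightarrow> ('a \<Rightarrow> 'a \<Rightarrow> real) \<Rightarrow> real \<Rightarrow> 'a \<Rightarrow> 'a \<Rightarrow> real" where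
  "mexp S Q t x y = (\<Sum>k. t ^ k / fact k * mpow S Q k x y)"

text \<open>Transition probabilities P_t(x,y) = P_x[eta(t) = y].\<close>
definition trans_prob :: "'a set \<Rightarrow> ('a \<Rightarrow> 'a \<Rightarrow> real) \<Rightarrow> real \<Rightarrow> 'a \<Rightarrow> 'a \<Rightarrow> real" where
  "trans_prob Om R t = mexp Om (generator Om R) t"

definition stationary :: "'a set \<Rightarrow> ('a \<Rightarrow> 'a \<Rightarrow> real) \<Rightarrow> ('a \<Rightarrow> real) \<Rightarrow> bool" where
  "stationary Om R nu \<longleftrightarrow> (\<forall>x\<in>Om. 0 \<le> nu x) \<and> (\<Sum>x\<in>Om. nu x) = 1 \<and>
     (\<forall>y\<in>Om. (\<Sum>x\<in>Om. nu x * generator Om R x y) = 0)"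

definition tv_dist :: "'a set \<Rightarrow> ('a \<Rightarrow> real) \<Rightarrow> ('a \<Rightarrow> real) \<Rightarrow> real" where
  "tv_dist Om p q = (\<Sum>x\<in>Om. \<bar>p x - q x\<bar>) / 2"

definition mixing_time :: "'a set \<Rightarrow> ('a \<Rightarrow> 'a \<Rightarrow> real) \<Rightarrow> ('a \<Rightarrow> real) \<Rightarrow> real" where
  "mixing_time Om R nu =
     Inf {t. 0 < t \<and> (\<forall>x\<in>Om. tv_dist Om (trans_prob Om R t x) nu \<le> 1 / 4)}"

definition cap_rate :: "'a set \<Rightarrow> ('a \<Rightarrow> 'a \<Rightarrow> real) \<Rightarrow> ('a \<Rightarrow> real) \<Rightarrow> 'a set \<Rightarrow> real" where
  "cap_rate Om R nu A =
     (\<Sum>x\<in>Om - A. nu x * (\<Sum>y\<in>A. R x y)) / (\<Sum>x\<in>Om - A. nu x)"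

text \<open>P_nu[H_A > t], H_A = inf{s>0. eta(s) \<in> A}: the chain started in A has H_A = 0;
  started at x outside A, P_x[H_A > t] = sum_y exp(t Q_{A^c})(x,y), where Q_{A^c} is
  the generator restricted to A^c (the chain killed upon entering A).\<close>
definition survival :: "'a set \<Rightarrow> ('a \<Rightarrow> 'a \<Rightarrow> real) \<Rightarrow> ('a \<Rightarrow> real) \<Rightarrow> 'a set \<Rightarrow> real \<Rightarrow> real" where
  "survival Om R nu A t =
     (\<Sum>x\<in>Om - A. nu x * (\<Sum>y\<in>Om - A. mexp (Om - A) (generator Om R) t x y))"

definition theta :: "'a set \<Rightarrow> ('a \<Rightarrow> 'a \<Rightarrow> real) \<Rightarrow> ('a \<Rightarrow> real) \<Rightarrow> 'a set \<Rightarrow> real" where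
  "theta Om R nu A = Inf {t. 0 < t \<and> survival Om R nu A t < exp (-1)}"

end

theory Submission
  imports Defs
begin

text \<open>Write S(t) = P_nu[H > t]. By stationarity the decrements of S are largest at time 0,
  where they are at most the flux into A, so S is Lipschitz with constant r(A^c, A). After a
  time U = K T_mix the chain is within 2^-K of nu in total variation from every state; hence a
  chain that has survived up to time a and is run for U more time units (losing mass at most
  U r meanwhile) survives a further time b with probability close to S(b). This gives
  |S(a + b) - S(a) S(b)| <= 2^-K + K T_mix r + nu(A), which is small for large N. Rescaled by
  theta_N, where S(theta_N) = exp(-1) by continuity, the survival functions are thus
  asymptotically multiplicative, antitone and equal to exp(-1) at 1; such functions converge
  to exp(-a), first at rational a and then, by monotonicity, everywhere.\<close>

section \<open>Matrix exponentials over a finite index set\<close>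

lemma abs_mpow_le:
  assumes "\<And>a b. a \<in> S \<Longrightarrow> b \<in> S \<Longrightarrow> \<bar>Q a b\<bar> \<le> M"
  shows "x \<in> S \<Longrightarrow> \<bar>mpow S Q k x y\<bar> \<le> (real (card S) * M) ^ k"
proof (induction k arbitrary: x)
  case 0
  then show ?case by simp
next
  case (Suc k)
  have M0: "0 \<le> M" using assms[OF Suc.prems Suc.prems] by linarith
  have "\<bar>mpow S Q (Suc k) x y\<bar> \<le> (\<Sum>z\<in>S. \<bar>Q x z\<bar> * \<bar>mpow S Q k z y\<bar>)"
    by (simp add: abs_mult[symmetric] sum_abs)
  also have "\<dots> \<le> (\<Sum>z\<in>S. M * (real (card S) * M) ^ k)"
    by (intro sum_mono mult_mono) (use Suc assms M0 in auto)
  also have "\<dots> = (real (card S) * M) ^ Suc k" by simp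
  finally show ?case .
qed

lemma summable_abs_mexp_series:
  assumes fin: "finite S" and x: "x \<in> S"
  shows "summable (\<lambda>k. \<bar>t ^ k / fact k * mpow S Q k x y\<bar>)"
proof -
  define M where "M = (\<Sum>a\<in>S. \<Sum>b\<in>S. \<bar>Q a b\<bar>)"
  have M: "\<bar>Q a b\<bar> \<le> M" if "a \<in> S" "b \<in> S" for a b
  proof -
    have "\<bar>Q a b\<bar> \<le> (\<Sum>b\<in>S. \<bar>Q a b\<bar>)"
      by (rule member_le_sum) (use that fin in auto)
    also have "\<dots> \<le> M"
      unfolding M_def by (rule member_le_sum[of a S "\<lambda>a. \<Sum>b\<in>S. \<bar>Q a b\<bar>"])
        (use that fin in \<open>auto intro: sum_nonneg\<close>)
    finally show ?thesis .
  qed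
  define C where "C = real (card S) * M"
  have "summable (\<lambda>k. inverse (fact k) * (\<bar>t\<bar> * C) ^ k)" by (rule summable_exp)
  then show ?thesis
  proof (rule summable_comparison_test'[where N=0])
    fix k :: nat
    have "norm \<bar>t ^ k / fact k * mpow S Q k x y\<bar> = \<bar>t\<bar> ^ k / fact k * \<bar>mpow S Q k x y\<bar>"
      by (simp add: abs_mult power_abs)
    also have "\<dots> \<le> \<bar>t\<bar> ^ k / fact k * C ^ k"
      by (intro mult_left_mono) (use abs_mpow_le[OF M x] C_def in auto)
    also have "\<dots> = inverse (fact k) * (\<bar>t\<bar> * C) ^ k"
      by (simp add: power_mult_distrib field_simps)
    finally show "norm \<bar>t ^ k / fact k * mpow S Q k x y\<bar> \<le> inverse (fact k) * (\<bar>t\<bar> * C) ^ k" .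
  qed
qed

lemma summable_mexp_series:
  "finite S \<Longrightarrow> x \<in> S \<Longrightarrow> summable (\<lambda>k. t ^ k / fact k * mpow S Q k x y)"
  by (rule summable_rabs_cancel[OF summable_abs_mexp_series])

lemma mexp_0 [simp]: "mexp S Q 0 x y = (if x = y then 1 else 0)"
proof -
  have "mexp S Q 0 x y = (\<Sum>k\<in>{0}. (0::real) ^ k / fact k * mpow S Q k x y)"
    unfolding mexp_def by (rule suminf_finite) auto
  then show ?thesis by simp
qed

lemma mpow_add:
  "finite S \<Longrightarrow> x \<in> S \<Longrightarrow> mpow S Q (i + j) x y = (\<Sum>z\<in>S. mpow S Q i x z * mpow S Q j z y)"
proof (induction i arbitrary: x)
  case 0
  have "(\<Sum>z\<in>S. (if x = z then 1 else 0) * mpow S Q j z y) = (\<Sum>z\<in>S. if x = z then mpow S Q j z y else 0)"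
    by (intro sum.cong) auto
  then show ?case using 0 by simp
next
  case (Suc i)
  have "mpow S Q (Suc i + j) x y = (\<Sum>w\<in>S. Q x w * (\<Sum>z\<in>S. mpow S Q i w z * mpow S Q j z y))"
    using Suc by simp
  also have "\<dots> = (\<Sum>z\<in>S. (\<Sum>w\<in>S. Q x w * mpow S Q i w z) * mpow S Q j z y)"
    by (simp only: sum_distrib_left sum_distrib_right mult.assoc) (rule sum.swap)
  finally show ?case by simp
qed

lemma sum_power_div_fact_binomial:
  fixes s t :: real
  shows "(\<Sum>i\<le>n. s ^ i / fact i * (t ^ (n - i) / fact (n - i))) = (s + t) ^ n / fact n"
proof -
  have "(s + t) ^ n / fact n = (\<Sum>i\<le>n. of_nat (n choose i) * s ^ i * t ^ (n - i) / fact n)"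
    by (simp add: binomial_ring sum_divide_distrib)
  also have "\<dots> = (\<Sum>i\<le>n. s ^ i / fact i * (t ^ (n - i) / fact (n - i)))"
    by (intro sum.cong refl) (simp add: binomial_fact)
  finally show ?thesis by simp
qed

lemma mexp_add:
  assumes fin: "finite S" and x: "x \<in> S"
  shows "mexp S Q (s + t) x y = (\<Sum>z\<in>S. mexp S Q s x z * mexp S Q t z y)"
proof -
  define a where "a z k = s ^ k / fact k * mpow S Q k x z" for z k
  define b where "b z k = t ^ k / fact k * mpow S Q k z y" for z k
  have sa: "summable (\<lambda>k. norm (a z k))" for z
    using summable_abs_mexp_series[OF fin x] unfolding a_def real_norm_def .
  have sb: "summable (\<lambda>k. norm (b z k))" if "z \<in> S" for z
    using summable_abs_mexp_series[OF fin that] unfolding b_def real_norm_def .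
  have "(\<Sum>z\<in>S. mexp S Q s x z * mexp S Q t z y) = (\<Sum>z\<in>S. (\<Sum>k. a z k) * (\<Sum>k. b z k))"
    by (simp add: mexp_def a_def b_def)
  also have "\<dots> = (\<Sum>z\<in>S. \<Sum>k. \<Sum>i\<le>k. a z i * b z (k - i))"
    by (intro sum.cong refl Cauchy_product sa sb)
  also have "\<dots> = (\<Sum>k. \<Sum>z\<in>S. \<Sum>i\<le>k. a z i * b z (k - i))"
    by (rule suminf_sum[symmetric]) (intro summable_Cauchy_product sa sb)
  also have "\<dots> = (\<Sum>k. (s + t) ^ k / fact k * mpow S Q k x y)"
  proof (intro suminf_cong)
    fix k
    have "(\<Sum>z\<in>S. \<Sum>i\<le>k. a z i * b z (k - i))
        = (\<Sum>i\<le>k. s ^ i / fact i * (t ^ (k - i) / fact (k - i))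
                    * (\<Sum>z\<in>S. mpow S Q i x z * mpow S Q (k - i) z y))"
      unfolding a_def b_def
      by (subst sum.swap) (auto simp add: sum_distrib_left mult_ac intro!: sum.cong)
    also have "\<dots> = (\<Sum>i\<le>k. s ^ i / fact i * (t ^ (k - i) / fact (k - i)) * mpow S Q k x y)"
      by (intro sum.cong refl) (simp add: mpow_add[OF fin x, symmetric])
    also have "\<dots> = (s + t) ^ k / fact k * mpow S Q k x y"
      by (simp only: sum_distrib_right[symmetric] sum_power_div_fact_binomial)
    finally show "(\<Sum>z\<in>S. \<Sum>i\<le>k. a z i * b z (k - i)) = (s + t) ^ k / fact k * mpow S Q k x y" .
  qed
  finally show ?thesis by (simp add: mexp_def)
qed

definition diag_shift :: "('a \<Rightarrow> 'a \<Rightarrow> real) \<Rightarrow> real \<Rightarrow> 'a \<Rightarrow> 'a \<Rightarrow> real" where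
  "diag_shift Q c x y = Q x y + (if x = y then c else 0)"

lemma binomial_sum_Suc:
  fixes f :: "nat \<Rightarrow> real"
  shows "(\<Sum>k\<le>n. of_nat (n choose k) * f (Suc k) * c ^ (n - k))
       + c * (\<Sum>k\<le>n. of_nat (n choose k) * f k * c ^ (n - k))
       = (\<Sum>k\<le>Suc n. of_nat (Suc n choose k) * f k * c ^ (Suc n - k))"
proof -
  define g where "g k = of_nat (n choose k) * f k * c ^ (Suc n - k)" for k
  have "c * (\<Sum>k\<le>n. of_nat (n choose k) * f k * c ^ (n - k)) = (\<Sum>k\<le>Suc n. g k)"
    unfolding sum_distrib_left g_def by (simp add: Suc_diff_le mult_ac)
  also have "\<dots> = g 0 + (\<Sum>k\<le>n. g (Suc k))"
    by (rule sum.atMost_Suc_shift)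
  finally have left: "c * (\<Sum>k\<le>n. of_nat (n choose k) * f k * c ^ (n - k)) = g 0 + (\<Sum>k\<le>n. g (Suc k))" .
  have "(\<Sum>k\<le>Suc n. of_nat (Suc n choose k) * f k * c ^ (Suc n - k))
      = f 0 * c ^ Suc n + (\<Sum>k\<le>n. of_nat (Suc n choose Suc k) * f (Suc k) * c ^ (n - k))"
    by (subst sum.atMost_Suc_shift) simp
  also have "(\<Sum>k\<le>n. of_nat (Suc n choose Suc k) * f (Suc k) * c ^ (n - k))
      = (\<Sum>k\<le>n. of_nat (n choose k) * f (Suc k) * c ^ (n - k)) + (\<Sum>k\<le>n. g (Suc k))"
    unfolding g_def sum.distrib[symmetric] by (intro sum.cong refl) (simp add: algebra_simps)
  finally show ?thesis using left by (simp add: g_def)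
qed

lemma mpow_diag_shift:
  assumes fin: "finite S"
  shows "x \<in> S \<Longrightarrow> mpow S (diag_shift Q c) n x y
           = (\<Sum>k\<le>n. of_nat (n choose k) * mpow S Q k x y * c ^ (n - k))"
proof (induction n arbitrary: x)
  case 0
  then show ?case by simp
next
  case (Suc n)
  let ?Qc = "diag_shift Q c"
  have diag: "(\<Sum>z\<in>S. (if x = z then c else 0) * mpow S ?Qc n z y) = c * mpow S ?Qc n x y"
  proof -
    have "(\<Sum>z\<in>S. (if x = z then c else 0) * mpow S ?Qc n z y) = (\<Sum>z\<in>S. if x = z then c * mpow S ?Qc n z y else 0)"
      by (intro sum.cong) auto
    then show ?thesis using Suc.prems fin by simp
  qed
  have "(\<Sum>z\<in>S. Q x z * mpow S ?Qc n z y)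
      = (\<Sum>z\<in>S. \<Sum>k\<le>n. Q x z * (of_nat (n choose k) * mpow S Q k z y * c ^ (n - k)))"
    by (intro sum.cong refl) (simp add: Suc.IH sum_distrib_left)
  also have "\<dots> = (\<Sum>k\<le>n. \<Sum>z\<in>S. Q x z * (of_nat (n choose k) * mpow S Q k z y * c ^ (n - k)))"
    by (rule sum.swap)
  also have "\<dots> = (\<Sum>k\<le>n. of_nat (n choose k) * mpow S Q (Suc k) x y * c ^ (n - k))"
    by (intro sum.cong refl) (simp add: sum_distrib_left sum_distrib_right mult_ac)
  finally have off_diag: "(\<Sum>z\<in>S. Q x z * mpow S ?Qc n z y)
      = (\<Sum>k\<le>n. of_nat (n choose k) * mpow S Q (Suc k) x y * c ^ (n - k))" .
  have "mpow S ?Qc (Suc n) x y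
      = (\<Sum>z\<in>S. Q x z * mpow S ?Qc n z y) + (\<Sum>z\<in>S. (if x = z then c else 0) * mpow S ?Qc n z y)"
    by (simp add: diag_shift_def distrib_right sum.distrib)
  then show ?case
    using diag off_diag binomial_sum_Suc[of n "\<lambda>k. mpow S Q k x y" c] Suc.IH[OF Suc.prems] by simp
qed

lemma mexp_diag_shift:
  assumes fin: "finite S" and x: "x \<in> S"
  shows "mexp S (diag_shift Q c) t x y = exp (c * t) * mexp S Q t x y"
proof -
  define a where "a i = t ^ i / fact i * mpow S Q i x y" for i
  define e where "e j = inverse (fact j) * (c * t) ^ j" for j
  have sa: "summable (\<lambda>k. norm (a k))"
    using summable_abs_mexp_series[OF fin x] unfolding a_def real_norm_def .
  have se: "summable (\<lambda>k. norm (e k))"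
    unfolding e_def real_norm_def using summable_exp[of "\<bar>c * t\<bar>"]
    by (simp add: abs_mult power_abs)
  have "exp (c * t) = (\<Sum>k. e k)"
    using exp_converges[of "c * t"] by (simp add: e_def sums_iff field_simps)
  then have "exp (c * t) * mexp S Q t x y = (\<Sum>k. a k) * (\<Sum>k. e k)"
    by (simp add: mexp_def a_def)
  also have "\<dots> = (\<Sum>k. \<Sum>i\<le>k. a i * e (k - i))"
    by (rule Cauchy_product[OF sa se])
  also have "\<dots> = (\<Sum>k. t ^ k / fact k * mpow S (diag_shift Q c) k x y)"
  proof (intro suminf_cong)
    fix k
    have "a i * e (k - i) = t ^ k / fact k * (of_nat (k choose i) * mpow S Q i x y * c ^ (k - i))"
      if "i \<le> k" for i
    proof -
      have "t ^ k = t ^ i * t ^ (k - i)" using that by (simp add: power_add[symmetric])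
      then show ?thesis unfolding a_def e_def using that
        by (simp add: binomial_fact power_mult_distrib divide_simps)
    qed
    then show "(\<Sum>i\<le>k. a i * e (k - i)) = t ^ k / fact k * mpow S (diag_shift Q c) k x y"
      by (simp add: mpow_diag_shift[OF fin x] sum_distrib_left)
  qed
  finally show ?thesis by (simp add: mexp_def)
qed

lemma mpow_nonneg:
  assumes "\<And>a b. a \<in> S \<Longrightarrow> b \<in> S \<Longrightarrow> 0 \<le> M a b"
  shows "x \<in> S \<Longrightarrow> 0 \<le> mpow S M k x y"
  by (induction k arbitrary: x) (auto intro!: sum_nonneg mult_nonneg_nonneg assms)

lemma mexp_nonneg:
  assumes "finite S" and "\<And>a b. a \<in> S \<Longrightarrow> b \<in> S \<Longrightarrow> 0 \<le> M a b" and "x \<in> S" and "0 \<le> t"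
  shows "0 \<le> mexp S M t x y"
  unfolding mexp_def
  by (intro suminf_nonneg summable_mexp_series mult_nonneg_nonneg divide_nonneg_pos mpow_nonneg)
    (use assms in auto)

lemma mpow_subset_le:
  assumes T: "finite T" and ST: "S \<subseteq> T" and M: "\<And>a b. a \<in> T \<Longrightarrow> b \<in> T \<Longrightarrow> 0 \<le> M a b"
  shows "x \<in> S \<Longrightarrow> mpow S M k x y \<le> mpow T M k x y"
proof (induction k arbitrary: x)
  case 0
  then show ?case by simp
next
  case (Suc k)
  have xT: "x \<in> T" using Suc.prems ST by auto
  have "(\<Sum>z\<in>S. M x z * mpow S M k z y) \<le> (\<Sum>z\<in>S. M x z * mpow T M k z y)"
    by (intro sum_mono mult_left_mono Suc.IH M) (use ST xT in auto)
  also have "\<dots> \<le> (\<Sum>z\<in>T. M x z * mpow T M k z y)"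
    by (intro sum_mono2 T ST mult_nonneg_nonneg M mpow_nonneg[where S=T]) (use xT in auto)
  finally show ?case by simp
qed

lemma mexp_subset_le:
  assumes T: "finite T" and ST: "S \<subseteq> T" and M: "\<And>a b. a \<in> T \<Longrightarrow> b \<in> T \<Longrightarrow> 0 \<le> M a b"
    and x: "x \<in> S" and t: "0 \<le> t"
  shows "mexp S M t x y \<le> mexp T M t x y"
proof -
  have "finite S" using T ST finite_subset by auto
  then show ?thesis unfolding mexp_def
    by (intro suminf_le summable_mexp_series mult_left_mono mpow_subset_le[OF T ST M x])
      (use t x ST T in auto)
qed

lemma mexp_ge_linear_part:
  assumes fin: "finite S" and M: "\<And>a b. a \<in> S \<Longrightarrow> b \<in> S \<Longrightarrow> 0 \<le> M a b"
    and x: "x \<in> S" and y: "y \<in> S" and h: "0 \<le> h"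
  shows "(if x = y then 1 else 0) + h * M x y \<le> mexp S M h x y"
proof -
  have "mpow S M 1 x y = (\<Sum>z\<in>S. if z = y then M x z else 0)"
    by (simp, intro sum.cong) auto
  then have "mpow S M 1 x y = M x y" using y fin by simp
  moreover have "(\<Sum>k\<in>{0,1}. h ^ k / fact k * mpow S M k x y) \<le> mexp S M h x y"
    unfolding mexp_def
    by (intro sum_le_suminf summable_mexp_series fin x mult_nonneg_nonneg divide_nonneg_pos
        mpow_nonneg[OF M x]) (use h in auto)
  ultimately show ?thesis by simp
qed

section \<open>Generators of finite Markov chains\<close>

text \<open>Adding unif_rate to the diagonal makes the generator entrywise nonnegative
  (uniformization); by mexp_diag_shift this transfers positivity and monotonicity
  in the state set from nonnegative matrices to exp(t Q).\<close>

definition unif_rate :: "'a set \<Rightarrow> ('a \<Rightarrow> 'a \<Rightarrow> real) \<Rightarrow> real" where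
  "unif_rate Om R = 1 + (\<Sum>a\<in>Om. \<Sum>z\<in>Om - {a}. R a z)"

lemma exit_rate_plus_1_le_unif_rate:
  assumes v: "valid_rates Om R" and x: "x \<in> Om"
  shows "(\<Sum>z\<in>Om - {x}. R x z) + 1 \<le> unif_rate Om R"
proof -
  have "(\<Sum>z\<in>Om - {x}. R x z) \<le> (\<Sum>a\<in>Om. \<Sum>z\<in>Om - {a}. R a z)"
    by (rule member_le_sum[of x Om "\<lambda>a. \<Sum>z\<in>Om - {a}. R a z"])
      (use v x in \<open>auto simp: valid_rates_def intro!: sum_nonneg\<close>)
  then show ?thesis by (simp add: unif_rate_def)
qed

lemma unif_rate_pos: "valid_rates Om R \<Longrightarrow> 0 < unif_rate Om R"
proof -
  assume v: "valid_rates Om R"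
  then obtain x where x: "x \<in> Om" by (auto simp: valid_rates_def)
  moreover have "0 \<le> (\<Sum>z\<in>Om - {x}. R x z)"
    using v x by (auto simp: valid_rates_def intro!: sum_nonneg)
  ultimately show ?thesis using exit_rate_plus_1_le_unif_rate[OF v] by fastforce
qed

lemma diag_shift_generator_nonneg:
  assumes "valid_rates Om R" "x \<in> Om" "y \<in> Om"
  shows "0 \<le> diag_shift (generator Om R) (unif_rate Om R) x y"
  using exit_rate_plus_1_le_unif_rate[OF assms(1,2)] assms
  by (auto simp: diag_shift_def generator_def valid_rates_def)

lemma mexp_generator_eq:
  assumes "finite S" and "x \<in> S"
  shows "mexp S (generator Om R) t x y
           = exp (- (unif_rate Om R * t)) * mexp S (diag_shift (generator Om R) (unif_rate Om R)) t x y"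
  by (simp add: mexp_diag_shift[OF assms] exp_minus field_simps)

lemma mexp_generator_nonneg:
  assumes v: "valid_rates Om R" and S: "S \<subseteq> Om" and x: "x \<in> S" and t: "0 \<le> t"
  shows "0 \<le> mexp S (generator Om R) t x y"
proof -
  have fin: "finite S" using v S by (auto simp: valid_rates_def intro: finite_subset)
  show ?thesis unfolding mexp_generator_eq[OF fin x]
    by (intro mult_nonneg_nonneg mexp_nonneg[OF fin _ x t])
      (use diag_shift_generator_nonneg[OF v] S in auto)
qed

lemma mexp_generator_subset_le:
  assumes v: "valid_rates Om R" and S: "S \<subseteq> Om" and x: "x \<in> S" and t: "0 \<le> t"
  shows "mexp S (generator Om R) t x y \<le> mexp Om (generator Om R) t x y"
proof -
  have fin: "finite Om" using v by (auto simp: valid_rates_def)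
  have finS: "finite S" using fin S by (auto intro: finite_subset)
  have xO: "x \<in> Om" using x S by auto
  show ?thesis unfolding mexp_generator_eq[OF fin xO] mexp_generator_eq[OF finS x]
    by (intro mult_left_mono mexp_subset_le[OF fin S _ x t])
      (use diag_shift_generator_nonneg[OF v] x S in auto)
qed

lemma generator_row_sum_subset:
  assumes v: "valid_rates Om R" and B: "B \<subseteq> Om" and x: "x \<in> B"
  shows "(\<Sum>y\<in>B. generator Om R x y) = - (\<Sum>z\<in>Om - B. R x z)"
proof -
  have fin: "finite Om" using v by (auto simp: valid_rates_def)
  have finB: "finite B" using fin B by (auto intro: finite_subset)
  have "Om - {x} = (B - {x}) \<union> (Om - B)" using B x by auto
  then have exit: "(\<Sum>z\<in>Om - {x}. R x z) = (\<Sum>y\<in>B - {x}. R x y) + (\<Sum>z\<in>Om - B. R x z)"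
    by (simp only:) (rule sum.union_disjoint; use fin finB in auto)
  have "(\<Sum>y\<in>B. generator Om R x y) = generator Om R x x + (\<Sum>y\<in>B - {x}. generator Om R x y)"
    using finB x by (simp add: sum.remove)
  also have "(\<Sum>y\<in>B - {x}. generator Om R x y) = (\<Sum>y\<in>B - {x}. R x y)"
    by (intro sum.cong) (auto simp: generator_def)
  finally show ?thesis using exit by (simp add: generator_def)
qed

lemma generator_row_sum:
  "valid_rates Om R \<Longrightarrow> x \<in> Om \<Longrightarrow> (\<Sum>y\<in>Om. generator Om R x y) = 0"
  using generator_row_sum_subset[of Om R Om x] by simp

lemma mpow_generator_row_sum:
  assumes v: "valid_rates Om R"
  shows "x \<in> Om \<Longrightarrow> (\<Sum>y\<in>Om. mpow Om (generator Om R) k x y) = (if k = 0 then 1 else 0)"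
proof (induction k arbitrary: x)
  case 0
  then show ?case using v by (simp add: valid_rates_def)
next
  case (Suc k)
  have "(\<Sum>y\<in>Om. mpow Om (generator Om R) (Suc k) x y)
      = (\<Sum>z\<in>Om. generator Om R x z * (\<Sum>y\<in>Om. mpow Om (generator Om R) k z y))"
    by (simp add: sum_distrib_left) (rule sum.swap)
  also have "\<dots> = (\<Sum>z\<in>Om. generator Om R x z) * (if k = 0 then 1 else 0)"
    by (simp add: Suc.IH sum_distrib_right)
  finally show ?case using generator_row_sum[OF v Suc.prems] by simp
qed

lemma mexp_generator_row_sum:
  assumes v: "valid_rates Om R" and x: "x \<in> Om"
  shows "(\<Sum>y\<in>Om. mexp Om (generator Om R) t x y) = 1"
proof -
  have fin: "finite Om" using v by (auto simp: valid_rates_def)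
  have "(\<Sum>y\<in>Om. mexp Om (generator Om R) t x y)
      = (\<Sum>k. \<Sum>y\<in>Om. t ^ k / fact k * mpow Om (generator Om R) k x y)"
    unfolding mexp_def by (rule suminf_sum[symmetric]) (rule summable_mexp_series[OF fin x])
  also have "\<dots> = (\<Sum>k. if k = 0 then 1 else 0)"
    by (intro suminf_cong) (simp only: sum_distrib_left[symmetric] mpow_generator_row_sum[OF v x], simp)
  also have "\<dots> = 1"
    by (subst suminf_finite[of "{0}"]) auto
  finally show ?thesis .
qed

lemma mexp_generator_stationary:
  assumes v: "valid_rates Om R" and st: "stationary Om R nu" and y: "y \<in> Om"
  shows "(\<Sum>x\<in>Om. nu x * mexp Om (generator Om R) t x y) = nu y"
proof -
  have fin: "finite Om" using v by (auto simp: valid_rates_def)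
  have nu_mpow: "(\<Sum>x\<in>Om. nu x * mpow Om (generator Om R) k x y) = (if k = 0 then nu y else 0)" for k
  proof (cases k)
    case 0
    have "(\<Sum>x\<in>Om. nu x * (if x = y then 1 else 0)) = (\<Sum>x\<in>Om. if x = y then nu x else 0)"
      by (intro sum.cong) auto
    then show ?thesis using 0 fin y by simp
  next
    case (Suc j)
    have "(\<Sum>x\<in>Om. nu x * mpow Om (generator Om R) k x y)
        = (\<Sum>z\<in>Om. (\<Sum>x\<in>Om. nu x * generator Om R x z) * mpow Om (generator Om R) j z y)"
      unfolding Suc by (simp add: sum_distrib_left sum_distrib_right mult.assoc) (rule sum.swap)
    also have "\<dots> = 0" using st by (simp add: stationary_def)
    finally show ?thesis using Suc by simp
  qed
  have "(\<Sum>x\<in>Om. nu x * mexp Om (generator Om R) t x y)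
      = (\<Sum>x\<in>Om. \<Sum>k. nu x * (t ^ k / fact k * mpow Om (generator Om R) k x y))"
    unfolding mexp_def by (intro sum.cong refl suminf_mult[symmetric] summable_mexp_series[OF fin])
  also have "\<dots> = (\<Sum>k. \<Sum>x\<in>Om. nu x * (t ^ k / fact k * mpow Om (generator Om R) k x y))"
    by (intro suminf_sum[symmetric] summable_mult summable_mexp_series[OF fin])
  also have "\<dots> = (\<Sum>k. t ^ k / fact k * (if k = 0 then nu y else 0))"
    by (intro suminf_cong) (simp add: sum_distrib_left mult_ac flip: nu_mpow)
  also have "\<dots> = nu y"
    by (subst suminf_finite[of "{0}"]) auto
  finally show ?thesis .
qed

section \<open>Convergence to the stationary distribution\<close>

lemma sum_abs_balanced_le:
  fixes w :: "'a \<Rightarrow> real" and g :: "'b \<Rightarrow> real" and p :: "'a \<Rightarrow> 'b \<Rightarrow> real"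
  assumes "(\<Sum>z\<in>S. w z) = 0"
  shows "(\<Sum>y\<in>T. \<bar>\<Sum>z\<in>S. w z * p z y\<bar>) \<le> (\<Sum>z\<in>S. \<bar>w z\<bar> * (\<Sum>y\<in>T. \<bar>p z y - g y\<bar>))"
proof -
  have balanced: "(\<Sum>z\<in>S. w z * p z y) = (\<Sum>z\<in>S. w z * (p z y - g y))" for y
    using assms by (simp add: right_diff_distrib sum_subtractf flip: sum_distrib_right)
  have "(\<Sum>y\<in>T. \<bar>\<Sum>z\<in>S. w z * p z y\<bar>) \<le> (\<Sum>y\<in>T. \<Sum>z\<in>S. \<bar>w z\<bar> * \<bar>p z y - g y\<bar>)"
    unfolding balanced by (intro sum_mono) (simp add: abs_mult[symmetric] sum_abs)
  also have "\<dots> = (\<Sum>z\<in>S. \<bar>w z\<bar> * (\<Sum>y\<in>T. \<bar>p z y - g y\<bar>))"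
    by (subst sum.swap) (simp add: sum_distrib_left)
  finally show ?thesis .
qed

locale stationary_chain =
  fixes Om :: "'a set" and R :: "'a \<Rightarrow> 'a \<Rightarrow> real" and nu :: "'a \<Rightarrow> real"
  assumes valid: "valid_rates Om R"
    and stat: "stationary Om R nu"
begin

abbreviation "P \<equiv> trans_prob Om R"

lemma finite_Om: "finite Om"
  using valid by (simp add: valid_rates_def)

lemma Om_nonempty: "Om \<noteq> {}"
  using valid by (simp add: valid_rates_def)

lemma nu_nonneg: "x \<in> Om \<Longrightarrow> 0 \<le> nu x"
  using stat by (simp add: stationary_def)

lemma sum_nu: "(\<Sum>x\<in>Om. nu x) = 1"
  using stat by (simp add: stationary_def)

lemma P_nonneg: "x \<in> Om \<Longrightarrow> 0 \<le> t \<Longrightarrow> 0 \<le> P t x y"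
  unfolding trans_prob_def by (rule mexp_generator_nonneg[OF valid subset_refl])

lemma P_row_sum: "x \<in> Om \<Longrightarrow> (\<Sum>y\<in>Om. P t x y) = 1"
  unfolding trans_prob_def by (rule mexp_generator_row_sum[OF valid])

lemma P_stationary: "y \<in> Om \<Longrightarrow> (\<Sum>x\<in>Om. nu x * P t x y) = nu y"
  unfolding trans_prob_def by (rule mexp_generator_stationary[OF valid stat])

lemma P_add: "x \<in> Om \<Longrightarrow> P (s + t) x y = (\<Sum>z\<in>Om. P s x z * P t z y)"
  unfolding trans_prob_def by (rule mexp_add[OF finite_Om])

lemma P_le_1:
  assumes x: "x \<in> Om" and t: "0 \<le> t" and y: "y \<in> Om"
  shows "P t x y \<le> 1"
proof -
  have "P t x y \<le> (\<Sum>y\<in>Om. P t x y)"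
    by (rule member_le_sum) (use y finite_Om P_nonneg[OF x t] in auto)
  then show ?thesis using P_row_sum[OF x] by simp
qed

definition close_to_stationary :: "real \<Rightarrow> real \<Rightarrow> bool" where
  "close_to_stationary t d \<longleftrightarrow> (\<forall>x\<in>Om. (\<Sum>y\<in>Om. \<bar>P t x y - nu y\<bar>) \<le> d)"

lemma close_to_stationary_iff_tv:
  "close_to_stationary t (1/2) \<longleftrightarrow> (\<forall>x\<in>Om. tv_dist Om (P t x) nu \<le> 1 / 4)"
  by (simp add: close_to_stationary_def tv_dist_def field_simps)

lemma close_to_stationary_nonneg:
  assumes "close_to_stationary t d"
  shows "0 \<le> d"
proof -
  obtain x where "x \<in> Om" using Om_nonempty by blast
  then have "(\<Sum>y\<in>Om. \<bar>P t x y - nu y\<bar>) \<le> d" using assms by (simp add: close_to_stationary_def)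
  then show ?thesis using sum_nonneg[of Om "\<lambda>y. \<bar>P t x y - nu y\<bar>"] by linarith
qed

lemma close_to_stationary_2: "0 \<le> t \<Longrightarrow> close_to_stationary t 2"
  unfolding close_to_stationary_def
proof
  fix x assume t: "0 \<le> t" and x: "x \<in> Om"
  have "(\<Sum>y\<in>Om. \<bar>P t x y - nu y\<bar>) \<le> (\<Sum>y\<in>Om. P t x y + nu y)"
    by (intro sum_mono) (use P_nonneg[OF x t] nu_nonneg in \<open>auto simp: abs_le_iff\<close>)
  also have "\<dots> = 2" using P_row_sum[OF x] sum_nu by (simp add: sum.distrib)
  finally show "(\<Sum>y\<in>Om. \<bar>P t x y - nu y\<bar>) \<le> 2" .
qed

lemma P_add_dist_le:
  assumes x: "x \<in> Om" and g: "\<And>z. z \<in> Om \<Longrightarrow> (\<Sum>y\<in>Om. \<bar>P t z y - g y\<bar>) \<le> b"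
    and b: "0 \<le> b" and a: "(\<Sum>z\<in>Om. \<bar>P s x z - nu z\<bar>) \<le> a"
  shows "(\<Sum>y\<in>Om. \<bar>P (s + t) x y - nu y\<bar>) \<le> a * b"
proof -
  have "P (s + t) x y - nu y = (\<Sum>z\<in>Om. (P s x z - nu z) * P t z y)" if "y \<in> Om" for y
    using P_add[OF x, of s t y] P_stationary[OF that, of t]
    by (simp add: left_diff_distrib sum_subtractf)
  then have "(\<Sum>y\<in>Om. \<bar>P (s + t) x y - nu y\<bar>) = (\<Sum>y\<in>Om. \<bar>\<Sum>z\<in>Om. (P s x z - nu z) * P t z y\<bar>)"
    by simp
  also have "\<dots> \<le> (\<Sum>z\<in>Om. \<bar>P s x z - nu z\<bar> * (\<Sum>y\<in>Om. \<bar>P t z y - g y\<bar>))"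
    by (rule sum_abs_balanced_le) (use P_row_sum[OF x] sum_nu in \<open>simp add: sum_subtractf\<close>)
  also have "\<dots> \<le> (\<Sum>z\<in>Om. \<bar>P s x z - nu z\<bar>) * b"
    by (simp add: sum_distrib_right) (intro sum_mono mult_left_mono g; simp)
  also have "\<dots> \<le> a * b" using a b by (rule mult_right_mono)
  finally show ?thesis .
qed

lemma close_to_stationary_add:
  assumes "close_to_stationary s a" "close_to_stationary t b"
  shows "close_to_stationary (s + t) (a * b)"
  using assms close_to_stationary_nonneg[OF assms(2)]
  by (auto simp: close_to_stationary_def intro!: P_add_dist_le[where g=nu])

lemma close_to_stationary_mult:
  "close_to_stationary T a \<Longrightarrow> close_to_stationary (real (Suc k) * T) (a ^ Suc k)"
proof (induction k)
  case 0
  then show ?case by simp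
next
  case (Suc k)
  have "close_to_stationary (real (Suc k) * T + T) (a ^ Suc k * a)"
    by (rule close_to_stationary_add[OF Suc.IH[OF Suc.prems] Suc.prems])
  then show ?case by (simp add: algebra_simps)
qed

end

locale irreducible_stationary_chain = stationary_chain +
  assumes irreducible: "irreducible_chain Om R"
begin

abbreviation "unif_pow \<equiv> mpow Om (diag_shift (generator Om R) (unif_rate Om R))"

lemma unif_pow_pos_if_relpow:
  "(x, y) \<in> (jump_rel Om R) ^^ j \<Longrightarrow> x \<in> Om \<Longrightarrow> 0 < unif_pow j x y"
proof (induction j arbitrary: x)
  case 0
  then show ?case by simp
next
  case (Suc j)
  obtain w where w: "(x, w) \<in> jump_rel Om R" "(w, y) \<in> (jump_rel Om R) ^^ j"
    using relpow_Suc_D2[OF Suc.prems(1)] by blast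
  have wO: "w \<in> Om" and xw: "x \<noteq> w" and Rp: "0 < R x w" using w(1) by (auto simp: jump_rel_def)
  have "0 < diag_shift (generator Om R) (unif_rate Om R) x w"
    using Rp xw by (simp add: diag_shift_def generator_def)
  then have "0 < diag_shift (generator Om R) (unif_rate Om R) x w * unif_pow j w y"
    using Suc.IH[OF w(2) wO] by simp
  also have "\<dots> \<le> unif_pow (Suc j) x y"
    by (simp, intro member_le_sum finite_Om wO mult_nonneg_nonneg diag_shift_generator_nonneg[OF valid]
        Suc.prems(2) mpow_nonneg[where S=Om]) auto
  finally show ?case .
qed

lemma unif_pow_pos_mono: "0 < unif_pow j x y \<Longrightarrow> x \<in> Om \<Longrightarrow> 0 < unif_pow (m + j) x y"
proof (induction m)
  case 0
  then show ?case by simp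
next
  case (Suc m)
  have "0 < diag_shift (generator Om R) (unif_rate Om R) x x"
    using exit_rate_plus_1_le_unif_rate[OF valid Suc.prems(2)] by (simp add: diag_shift_def generator_def)
  then have "0 < diag_shift (generator Om R) (unif_rate Om R) x x * unif_pow (m + j) x y"
    using Suc by simp
  also have "\<dots> \<le> unif_pow (Suc m + j) x y"
    by (simp, intro member_le_sum finite_Om Suc.prems(2) mult_nonneg_nonneg
        diag_shift_generator_nonneg[OF valid] mpow_nonneg[where S=Om]) auto
  finally show ?case .
qed

text \<open>Irreducibility yields a common number K of jumps connecting any two states, so the
  K-th term of the uniformized series bounds every entry of P 1 from below.\<close>

lemma doeblin_minorization: "\<exists>\<delta>>0. \<forall>x\<in>Om. \<forall>y\<in>Om. \<delta> \<le> P 1 x y"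
proof -
  have "\<forall>p\<in>Om \<times> Om. \<exists>j. p \<in> jump_rel Om R ^^ j"
    using irreducible by (auto simp: irreducible_chain_def intro: rtrancl_imp_relpow)
  then obtain j where j: "\<And>p. p \<in> Om \<times> Om \<Longrightarrow> p \<in> jump_rel Om R ^^ j p" by metis
  define K where "K = (\<Sum>p\<in>Om \<times> Om. j p)"
  have K_pos: "0 < unif_pow K x y" if "x \<in> Om" "y \<in> Om" for x y
  proof -
    have le: "j (x, y) \<le> K" unfolding K_def
      by (rule member_le_sum) (use that finite_Om in auto)
    have "0 < unif_pow ((K - j (x, y)) + j (x, y)) x y"
      by (intro unif_pow_pos_mono unif_pow_pos_if_relpow j) (use that in auto)
    then show ?thesis using le by simp
  qed
  define V where "V = (\<lambda>(x, y). unif_pow K x y) ` (Om \<times> Om)"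
  have V: "finite V" "V \<noteq> {}" using finite_Om Om_nonempty by (auto simp: V_def)
  have "0 < Min V" using V K_pos by (auto simp: V_def)
  moreover have "exp (- unif_rate Om R) / fact K * Min V \<le> P 1 x y" if x: "x \<in> Om" and y: "y \<in> Om" for x y
  proof -
    have "Min V \<le> unif_pow K x y" using V(1) x y by (auto simp: V_def intro!: Min_le)
    also have "\<dots> = fact K * ((\<Sum>k\<in>{K}. 1 ^ k / fact k * unif_pow k x y))" by simp
    also have "\<dots> \<le> fact K * mexp Om (diag_shift (generator Om R) (unif_rate Om R)) 1 x y"
      unfolding mexp_def
      by (intro mult_left_mono sum_le_suminf summable_mexp_series finite_Om x mult_nonneg_nonneg
          divide_nonneg_pos mpow_nonneg[where S=Om] diag_shift_generator_nonneg[OF valid]) auto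
    finally show ?thesis
      unfolding trans_prob_def mexp_generator_eq[OF finite_Om x] by (simp add: field_simps)
  qed
  ultimately show ?thesis
    by (intro exI[of _ "exp (- unif_rate Om R) / fact K * Min V"]) auto
qed

lemma close_to_stationary_somewhere: "\<exists>T>0. close_to_stationary T (1/2)"
proof -
  obtain \<delta> where \<delta>: "0 < \<delta>" "\<And>x y. x \<in> Om \<Longrightarrow> y \<in> Om \<Longrightarrow> \<delta> \<le> P 1 x y"
    using doeblin_minorization by blast
  define \<rho> where "\<rho> = 1 - real (card Om) * \<delta>"
  have row: "(\<Sum>y\<in>Om. \<bar>P 1 z y - \<delta>\<bar>) = \<rho>" if z: "z \<in> Om" for z
  proof -
    have "(\<Sum>y\<in>Om. \<bar>P 1 z y - \<delta>\<bar>) = (\<Sum>y\<in>Om. P 1 z y - \<delta>)"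
      using \<delta> z by (intro sum.cong) auto
    also have "\<dots> = \<rho>" using P_row_sum[OF z] by (simp add: sum_subtractf \<rho>_def)
    finally show ?thesis .
  qed
  have "0 < card Om" using finite_Om Om_nonempty card_gt_0_iff by blast
  then have \<rho>1: "\<rho> < 1" using \<delta> by (simp add: \<rho>_def)
  obtain x0 where "x0 \<in> Om" using Om_nonempty by blast
  then have \<rho>0: "0 \<le> \<rho>" using row sum_nonneg[of Om "\<lambda>y. \<bar>P 1 x0 y - \<delta>\<bar>"] by simp
  have powers: "close_to_stationary (real k) (2 * \<rho> ^ k)" for k
  proof (induction k)
    case 0
    then show ?case using close_to_stationary_2[of 0] by simp
  next
    case (Suc k)
    have "close_to_stationary (real k + 1) (2 * \<rho> ^ k * \<rho>)"
      using Suc.IH row \<rho>0 by (auto simp: close_to_stationary_def intro!: P_add_dist_le[where g="\<lambda>_. \<delta>"])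
    then show ?case by (simp add: algebra_simps)
  qed
  obtain k where k: "\<rho> ^ k < 1/4" using real_arch_pow_inv[OF _ \<rho>1, of "1/4"] by auto
  have "\<rho> ^ Suc k \<le> \<rho> ^ k" using \<rho>0 \<rho>1 by (simp add: mult_left_le_one_le)
  then have "close_to_stationary (real (Suc k)) (1/2)"
    using powers[of "Suc k"] k unfolding close_to_stationary_def by force
  then show ?thesis by (intro exI[of _ "real (Suc k)"]) auto
qed

lemma close_to_stationary_near_mixing_time:
  assumes "0 < \<delta>"
  obtains T where "0 < T" "T < mixing_time Om R nu + \<delta>" "close_to_stationary T (1/2)"
proof -
  define Z where "Z = {t. 0 < t \<and> (\<forall>x\<in>Om. tv_dist Om (P t x) nu \<le> 1 / 4)}"
  have "mixing_time Om R nu = Inf Z" by (simp add: mixing_time_def Z_def)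
  moreover have "Z \<noteq> {}"
    using close_to_stationary_somewhere close_to_stationary_iff_tv by (auto simp: Z_def)
  moreover have "bdd_below Z" by (auto simp: Z_def bdd_below_def intro!: exI[of _ 0])
  ultimately obtain T where "T \<in> Z" "T < mixing_time Om R nu + \<delta>"
    using cInf_less_iff[of Z "mixing_time Om R nu + \<delta>"] assms by auto
  then show ?thesis using that close_to_stationary_iff_tv by (auto simp: Z_def)
qed

end

section \<open>Survival of the chain killed on entering a set\<close>

lemma exp_minus_mult_ge:
  fixes u w :: real
  assumes "0 \<le> u" "0 \<le> w"
  shows "1 - u\<^sup>2 - w \<le> exp (- u) * (1 + u - w)"
proof -
  have "(1 - u) * (1 + u) \<le> exp (- u) * (1 + u)"
    using assms exp_ge_add_one_self[of "- u"] by (intro mult_right_mono) auto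
  moreover have "exp (- u) * w \<le> w"
    using assms by (simp add: mult_left_le_one_le)
  ultimately show ?thesis by (simp add: algebra_simps power2_eq_square)
qed

locale killed_chain = stationary_chain +
  fixes A :: "'a set"
  assumes A_subset: "A \<subseteq> Om"
begin

abbreviation "S \<equiv> survival Om R nu A"

text \<open>survive t x is P_x[H_A > t]; killed_dist t z is P_nu[H_A > t, eta(t) = z].\<close>

definition survive :: "real \<Rightarrow> 'a \<Rightarrow> real" where
  "survive t x = (\<Sum>y\<in>Om - A. mexp (Om - A) (generator Om R) t x y)"

definition killed_dist :: "real \<Rightarrow> 'a \<Rightarrow> real" where
  "killed_dist t z = (\<Sum>x\<in>Om - A. nu x * mexp (Om - A) (generator Om R) t x z)"

definition flux :: real where
  "flux = (\<Sum>x\<in>Om - A. nu x * (\<Sum>y\<in>A. R x y))"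

lemma killed_mexp_nonneg: "x \<in> Om - A \<Longrightarrow> 0 \<le> t \<Longrightarrow> 0 \<le> mexp (Om - A) (generator Om R) t x y"
  by (rule mexp_generator_nonneg[OF valid]) auto

lemma killed_mexp_le_P: "x \<in> Om - A \<Longrightarrow> 0 \<le> t \<Longrightarrow> mexp (Om - A) (generator Om R) t x y \<le> P t x y"
  unfolding trans_prob_def by (rule mexp_generator_subset_le[OF valid]) auto

lemma sum_nu_outside: "(\<Sum>x\<in>Om - A. nu x) = 1 - (\<Sum>x\<in>A. nu x)"
  using sum.subset_diff[OF A_subset finite_Om, of nu] sum_nu by simp

lemma sum_nu_A_nonneg: "0 \<le> (\<Sum>x\<in>A. nu x)"
  using A_subset by (auto intro!: sum_nonneg nu_nonneg)

lemma sum_nu_nonneg: "0 \<le> (\<Sum>x\<in>Om - A. nu x)"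
  by (auto intro!: sum_nonneg nu_nonneg)

lemma sum_nu_outside_le_1: "(\<Sum>x\<in>Om - A. nu x) \<le> 1"
  using sum_nu_outside sum_nu_A_nonneg by simp

lemma survive_nonneg: "x \<in> Om - A \<Longrightarrow> 0 \<le> t \<Longrightarrow> 0 \<le> survive t x"
  unfolding survive_def by (intro sum_nonneg killed_mexp_nonneg)

lemma survive_le_1:
  assumes x: "x \<in> Om - A" and t: "0 \<le> t"
  shows "survive t x \<le> 1"
proof -
  have xO: "x \<in> Om" using x by auto
  have "survive t x \<le> (\<Sum>y\<in>Om - A. P t x y)"
    unfolding survive_def by (intro sum_mono killed_mexp_le_P x t)
  also have "\<dots> \<le> (\<Sum>y\<in>Om. P t x y)"
    by (intro sum_mono2 finite_Om P_nonneg[OF xO t]) auto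
  finally show ?thesis using P_row_sum[OF xO] by simp
qed

lemma survive_0: "x \<in> Om - A \<Longrightarrow> survive 0 x = 1"
  unfolding survive_def using finite_Om by simp

lemma survive_add:
  "x \<in> Om - A \<Longrightarrow> survive (s + t) x = (\<Sum>z\<in>Om - A. mexp (Om - A) (generator Om R) s x z * survive t z)"
  unfolding survive_def using finite_Om
  by (simp add: mexp_add sum_distrib_left) (rule sum.swap)

lemma survival_eq: "S t = (\<Sum>x\<in>Om - A. nu x * survive t x)"
  by (simp add: survival_def survive_def)

lemma survival_eq_sum_killed_dist: "S t = (\<Sum>z\<in>Om - A. killed_dist t z)"
  unfolding survival_eq survive_def killed_dist_def by (simp add: sum_distrib_left) (rule sum.swap)

lemma survival_add: "S (t + h) = (\<Sum>z\<in>Om - A. killed_dist t z * survive h z)"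
  unfolding survival_eq killed_dist_def
  by (simp add: survive_add sum_distrib_left sum_distrib_right mult.assoc) (rule sum.swap)

lemma killed_dist_nonneg: "0 \<le> t \<Longrightarrow> z \<in> Om - A \<Longrightarrow> 0 \<le> killed_dist t z"
  unfolding killed_dist_def by (auto intro!: sum_nonneg mult_nonneg_nonneg nu_nonneg killed_mexp_nonneg)

lemma killed_dist_le_nu:
  assumes t: "0 \<le> t" and z: "z \<in> Om - A"
  shows "killed_dist t z \<le> nu z"
proof -
  have "killed_dist t z \<le> (\<Sum>x\<in>Om - A. nu x * P t x z)"
    unfolding killed_dist_def by (auto intro!: sum_mono mult_left_mono nu_nonneg killed_mexp_le_P t)
  also have "\<dots> \<le> (\<Sum>x\<in>Om. nu x * P t x z)"
    by (intro sum_mono2 finite_Om mult_nonneg_nonneg nu_nonneg P_nonneg t) auto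
  also have "\<dots> = nu z" using z by (simp add: P_stationary)
  finally show ?thesis .
qed

lemma killed_dist_0: "z \<in> Om - A \<Longrightarrow> killed_dist 0 z = nu z"
  unfolding killed_dist_def using finite_Om by (simp add: if_distrib cong: if_cong)

lemma survival_nonneg: "0 \<le> t \<Longrightarrow> 0 \<le> S t"
  unfolding survival_eq by (auto intro!: sum_nonneg mult_nonneg_nonneg nu_nonneg survive_nonneg)

lemma survival_le_1:
  assumes "0 \<le> t"
  shows "S t \<le> 1"
proof -
  have "S t \<le> (\<Sum>x\<in>Om - A. nu x)"
    unfolding survival_eq
    by (intro sum_mono) (auto intro!: mult_right_le_one_le nu_nonneg survive_nonneg survive_le_1 assms)
  then show ?thesis using sum_nu_outside_le_1 by simp
qed

lemma survival_0: "S 0 = 1 - (\<Sum>x\<in>A. nu x)"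
  unfolding survival_eq using sum_nu_outside by (simp add: survive_0)

lemma survival_diff: "S t - S (t + h) = (\<Sum>z\<in>Om - A. killed_dist t z * (1 - survive h z))"
  by (simp add: survival_add survival_eq_sum_killed_dist[of t] sum_subtractf right_diff_distrib)

lemma survival_antimono:
  assumes "0 \<le> a" "a \<le> b"
  shows "S b \<le> S a"
proof -
  have "0 \<le> (\<Sum>z\<in>Om - A. killed_dist a z * (1 - survive (b - a) z))"
    using assms by (intro sum_nonneg mult_nonneg_nonneg killed_dist_nonneg) (auto simp: survive_le_1)
  then show ?thesis using survival_diff[of a "b - a"] by simp
qed

text \<open>Stationarity of nu makes the survival decrements largest at time 0.\<close>

lemma survival_diff_le_initial:
  assumes t: "0 \<le> t" and h: "0 \<le> h"
  shows "S t - S (t + h) \<le> S 0 - S h"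
proof -
  have "S t - S (t + h) \<le> (\<Sum>z\<in>Om - A. nu z * (1 - survive h z))"
    unfolding survival_diff
    by (intro sum_mono mult_right_mono killed_dist_le_nu t) (auto simp: survive_le_1 h)
  also have "\<dots> = S 0 - S (0 + h)"
    using survival_diff[of 0 h] by (simp add: killed_dist_0)
  finally show ?thesis by simp
qed

lemma rate_into_nonneg: "x \<in> Om - A \<Longrightarrow> 0 \<le> (\<Sum>y\<in>A. R x y)"
  using valid A_subset by (force simp: valid_rates_def intro!: sum_nonneg)

lemma flux_nonneg: "0 \<le> flux"
  unfolding flux_def by (auto intro!: sum_nonneg mult_nonneg_nonneg nu_nonneg rate_into_nonneg)

lemma one_minus_survive_le:
  assumes x: "x \<in> Om - A" and h: "0 \<le> h"
  shows "1 - survive h x \<le> h * (\<Sum>y\<in>A. R x y) + (unif_rate Om R * h)\<^sup>2"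
proof -
  let ?c = "unif_rate Om R" and ?r = "\<Sum>y\<in>A. R x y"
  let ?Qc = "diag_shift (generator Om R) ?c"
  have fin: "finite (Om - A)" using finite_Om by simp
  have "(\<Sum>y\<in>Om - A. ?Qc x y) = (\<Sum>y\<in>Om - A. generator Om R x y) + ?c"
    using x fin by (simp add: diag_shift_def sum.distrib)
  also have "(\<Sum>y\<in>Om - A. generator Om R x y) = - ?r"
    using generator_row_sum_subset[OF valid _ x] A_subset by (simp add: Diff_Diff_Int inf_absorb2)
  finally have row: "(\<Sum>y\<in>Om - A. ?Qc x y) = ?c - ?r" by simp
  have "exp (- (?c * h)) * (1 + ?c * h - h * ?r)
      = exp (- (?c * h)) * (\<Sum>y\<in>Om - A. (if x = y then 1 else 0) + h * ?Qc x y)"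
    using x fin by (simp add: sum.distrib row algebra_simps flip: sum_distrib_left)
  also have "\<dots> \<le> exp (- (?c * h)) * (\<Sum>y\<in>Om - A. mexp (Om - A) ?Qc h x y)"
    by (intro mult_left_mono sum_mono mexp_ge_linear_part fin x h)
      (use diag_shift_generator_nonneg[OF valid] in auto)
  also have "\<dots> = survive h x"
    unfolding survive_def mexp_generator_eq[OF fin x] by (simp add: sum_distrib_left)
  finally have "exp (- (?c * h)) * (1 + ?c * h - h * ?r) \<le> survive h x" .
  moreover have "1 - (?c * h)\<^sup>2 - h * ?r \<le> exp (- (?c * h)) * (1 + ?c * h - h * ?r)"
    using unif_rate_pos[OF valid] h rate_into_nonneg[OF x] by (intro exp_minus_mult_ge) auto
  ultimately show ?thesis by simp
qed

lemma survival_initial_drop_le: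
  assumes h: "0 \<le> h"
  shows "S 0 - S h \<le> h * flux + (unif_rate Om R * h)\<^sup>2"
proof -
  have "S 0 - S h = (\<Sum>x\<in>Om - A. nu x * (1 - survive h x))"
    using survival_diff[of 0 h] by (simp add: killed_dist_0)
  also have "\<dots> \<le> (\<Sum>x\<in>Om - A. nu x * (h * (\<Sum>y\<in>A. R x y) + (unif_rate Om R * h)\<^sup>2))"
    by (intro sum_mono mult_left_mono one_minus_survive_le h nu_nonneg) auto
  also have "\<dots> = h * flux + (unif_rate Om R * h)\<^sup>2 * (\<Sum>x\<in>Om - A. nu x)"
    by (simp add: flux_def distrib_left sum.distrib sum_distrib_left sum_distrib_right mult_ac)
  also have "\<dots> \<le> h * flux + (unif_rate Om R * h)\<^sup>2"
    using sum_nu_outside_le_1 by (intro add_left_mono mult_right_le_one_le) (auto intro!: sum_nonneg nu_nonneg)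
  finally show ?thesis .
qed

lemma survival_drop_le_steps:
  assumes "0 \<le> t" "0 \<le> d"
  shows "S t - S (t + real m * d) \<le> real m * (d * flux + (unif_rate Om R * d)\<^sup>2)"
proof (induction m)
  case 0
  then show ?case by simp
next
  case (Suc m)
  have "S (t + real m * d) - S (t + real m * d + d) \<le> S 0 - S d"
    using assms by (intro survival_diff_le_initial) auto
  also have "\<dots> \<le> d * flux + (unif_rate Om R * d)\<^sup>2" using survival_initial_drop_le assms by simp
  finally show ?case using Suc by (simp add: algebra_simps)
qed

text \<open>Splitting [a, b] into n steps turns the quadratic error of
  survival_initial_drop_le into one of order 1/n.\<close>

lemma survival_lipschitz:
  assumes a: "0 \<le> a" and ab: "a \<le> b"
  shows "S a - S b \<le> (b - a) * flux"
proof -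
  define h c where "h = b - a" and "c = unif_rate Om R"
  have "S a - S b \<le> h * flux"
  proof (rule LIMSEQ_le_const)
    show "(\<lambda>n. h * flux + (c * h)\<^sup>2 * inverse (real (Suc n))) \<longlonglongrightarrow> h * flux"
      using tendsto_add[OF tendsto_const tendsto_mult[OF tendsto_const LIMSEQ_inverse_real_of_nat],
          of "h * flux" "(c * h)\<^sup>2"] by simp
    show "\<exists>N. \<forall>n\<ge>N. S a - S b \<le> h * flux + (c * h)\<^sup>2 * inverse (real (Suc n))"
    proof (intro exI allI impI)
      fix n :: nat
      define k where "k = real (Suc n)"
      have k: "0 < k" by (simp add: k_def)
      have "S a - S (a + k * (h / k)) \<le> k * (h / k * flux + (c * (h / k))\<^sup>2)"
        using a ab k unfolding h_def c_def k_def by (intro survival_drop_le_steps) auto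
      also have "\<dots> = h * flux + (c * h)\<^sup>2 * inverse k"
        using k by (simp add: field_simps power2_eq_square)
      finally show "S a - S b \<le> h * flux + (c * h)\<^sup>2 * inverse (real (Suc n))"
        using k by (simp add: h_def k_def)
    qed
  qed
  then show ?thesis by (simp add: h_def)
qed

lemma flux_le_cap_rate: "flux \<le> cap_rate Om R nu A"
proof (cases "(\<Sum>x\<in>Om - A. nu x) = 0")
  case True
  then have "\<forall>x\<in>Om - A. nu x = 0"
    using sum_nonneg_eq_0_iff[of "Om - A" nu] finite_Om nu_nonneg by blast
  then show ?thesis by (simp add: flux_def cap_rate_def)
next
  case False
  then have "0 < (\<Sum>x\<in>Om - A. nu x)" using sum_nu_nonneg by linarith
  then have "flux * 1 \<le> flux / (\<Sum>x\<in>Om - A. nu x)"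
    using sum_nu_outside_le_1 flux_nonneg by (simp add: le_divide_eq mult_left_le)
  then show ?thesis by (simp add: cap_rate_def flux_def)
qed

lemma P_survive_close:
  assumes z: "z \<in> Om" and r: "0 \<le> r" and D: "close_to_stationary U d"
  shows "\<bar>(\<Sum>w\<in>Om - A. P U z w * survive r w) - S r\<bar> \<le> d"
proof -
  have "\<bar>(\<Sum>w\<in>Om - A. P U z w * survive r w) - S r\<bar> = \<bar>\<Sum>w\<in>Om - A. (P U z w - nu w) * survive r w\<bar>"
    unfolding survival_eq left_diff_distrib sum_subtractf by simp
  also have "\<dots> \<le> (\<Sum>w\<in>Om - A. \<bar>P U z w - nu w\<bar>)"
    by (rule order_trans[OF sum_abs], intro sum_mono)
      (use survive_nonneg survive_le_1 r in \<open>auto simp: abs_mult intro: mult_left_le\<close>)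
  also have "\<dots> \<le> (\<Sum>w\<in>Om. \<bar>P U z w - nu w\<bar>)"
    by (intro sum_mono2 finite_Om) auto
  also have "\<dots> \<le> d" using D z by (simp add: close_to_stationary_def)
  finally show ?thesis .
qed

lemma survive_after_mixing_upper:
  assumes z: "z \<in> Om - A" and U: "0 \<le> U" and r: "0 \<le> r" and D: "close_to_stationary U d"
  shows "survive (U + r) z \<le> S r + d"
proof -
  have "survive (U + r) z \<le> (\<Sum>w\<in>Om - A. P U z w * survive r w)"
    unfolding survive_add[OF z]
    by (intro sum_mono mult_right_mono killed_mexp_le_P z U survive_nonneg r) auto
  moreover have "z \<in> Om" using z by auto
  ultimately show ?thesis using P_survive_close[OF _ r D, of z] by linarith
qed

text \<open>The paths that are killed before U and revive in the unkilled dynamics account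
  for at most 1 - survive U z.\<close>

lemma survive_after_mixing_lower:
  assumes z: "z \<in> Om - A" and U: "0 \<le> U" and r: "0 \<le> r" and D: "close_to_stationary U d"
  shows "S r - d - (1 - survive U z) \<le> survive (U + r) z"
proof -
  have zO: "z \<in> Om" using z by auto
  have "(\<Sum>w\<in>Om - A. P U z w * survive r w) - survive (U + r) z
      = (\<Sum>w\<in>Om - A. (P U z w - mexp (Om - A) (generator Om R) U z w) * survive r w)"
    unfolding survive_add[OF z] by (simp add: sum_subtractf left_diff_distrib)
  also have "\<dots> \<le> (\<Sum>w\<in>Om - A. P U z w - mexp (Om - A) (generator Om R) U z w)"
    by (intro sum_mono mult_right_le_one_le)
      (use survive_nonneg survive_le_1 killed_mexp_le_P[OF z U] r in auto)
  also have "\<dots> = (\<Sum>w\<in>Om - A. P U z w) - survive U z"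
    by (simp add: survive_def sum_subtractf)
  also have "\<dots> \<le> 1 - survive U z"
    using P_row_sum[OF zO] sum_mono2[OF finite_Om, of "Om - A" "P U z"] P_nonneg[OF zO U] by auto
  finally show ?thesis using P_survive_close[OF zO r D] by linarith
qed

lemma survival_approx_mult_long:
  assumes U: "0 \<le> U" and D: "close_to_stationary U d" and a: "0 \<le> a" and Ub: "U \<le> b"
  shows "\<bar>S (a + b) - S a * S b\<bar> \<le> d + U * flux"
proof -
  define r where "r = b - U"
  have r: "0 \<le> r" and b: "b = U + r" using Ub by (auto simp: r_def)
  have split: "S (a + b) = (\<Sum>z\<in>Om - A. killed_dist a z * survive (U + r) z)"
    using survival_add[of a "U + r"] b by simp
  have upper: "S (a + b) \<le> S a * (S r + d)"
  proof -
    have "S (a + b) \<le> (\<Sum>z\<in>Om - A. killed_dist a z * (S r + d))"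
      unfolding split
      by (intro sum_mono mult_left_mono survive_after_mixing_upper killed_dist_nonneg U r D a) auto
    then show ?thesis by (simp add: survival_eq_sum_killed_dist sum_distrib_right)
  qed
  have lower: "S a * (S r - d) - U * flux \<le> S (a + b)"
  proof -
    have "(\<Sum>z\<in>Om - A. killed_dist a z * (S r - d - (1 - survive U z))) \<le> S (a + b)"
      unfolding split
      by (intro sum_mono mult_left_mono survive_after_mixing_lower killed_dist_nonneg U r D a) auto
    moreover have "(\<Sum>z\<in>Om - A. killed_dist a z * (S r - d - (1 - survive U z)))
        = S a * (S r - d) - (S a - S (a + U))"
      by (simp add: survival_add survival_eq_sum_killed_dist[of a] right_diff_distrib
          sum_subtractf sum_distrib_right)
    moreover have "S a - S (a + U) \<le> U * flux" using survival_lipschitz[of a "a + U"] a U by simp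
    ultimately show ?thesis by linarith
  qed
  have Sa: "0 \<le> S a" "S a \<le> 1" using a survival_nonneg survival_le_1 by auto
  have Srb: "0 \<le> S r - S b" "S r - S b \<le> U * flux"
    using survival_antimono[OF r, of b] survival_lipschitz[OF r, of b] b U by auto
  have "S a * (S r - S b) \<le> U * flux" "0 \<le> S a * (S r - S b)"
    using Sa Srb by (auto intro: order_trans[OF mult_left_le_one_le])
  moreover have "S a * d \<le> d" "0 \<le> S a * d"
    using Sa close_to_stationary_nonneg[OF D] by (auto simp: mult_left_le_one_le)
  ultimately show ?thesis using upper lower by (simp add: abs_le_iff algebra_simps)
qed

lemma survival_approx_mult_short:
  assumes a: "0 \<le> a" and b: "0 \<le> b" and bU: "b \<le> U"
  shows "\<bar>S (a + b) - S a * S b\<bar> \<le> U * flux + (\<Sum>x\<in>A. nu x)"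
proof -
  have Sa: "0 \<le> S a" "S a \<le> 1" and Sb: "0 \<le> S b" "S b \<le> 1"
    using a b survival_nonneg survival_le_1 by auto
  have bf: "b * flux \<le> U * flux" using bU flux_nonneg by (rule mult_right_mono)
  have "S (a + b) \<le> S a" "S a - S (a + b) \<le> b * flux"
    using survival_antimono[OF a, of "a + b"] survival_lipschitz[OF a, of "a + b"] b by auto
  moreover have "S a * S b \<le> S a" using Sa Sb by (simp add: mult_left_le)
  moreover have "S a * (1 - S b) \<le> 1 - S b" using Sa Sb by (simp add: mult_left_le_one_le)
  moreover have "1 - S b \<le> (\<Sum>x\<in>A. nu x) + b * flux"
    using survival_lipschitz[of 0 b] b by (simp add: survival_0)
  ultimately show ?thesis
    using bf flux_nonneg sum_nu_A_nonneg by (auto simp: abs_le_iff algebra_simps)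
qed

lemma survival_approx_mult_close:
  assumes U: "0 \<le> U" and D: "close_to_stationary U d" and a: "0 \<le> a" and b: "0 \<le> b"
  shows "\<bar>S (a + b) - S a * S b\<bar> \<le> d + U * flux + (\<Sum>x\<in>A. nu x)"
proof (cases "U \<le> b")
  case True
  then show ?thesis
    using survival_approx_mult_long[OF U D a] sum_nu_A_nonneg by force
next
  case False
  then have "\<bar>S (a + b) - S a * S b\<bar> \<le> U * flux + (\<Sum>x\<in>A. nu x)"
    by (intro survival_approx_mult_short[OF a b]) simp
  then show ?thesis using close_to_stationary_nonneg[OF D] by simp
qed

lemma survive_nat_le:
  assumes q: "0 \<le> q" and one: "\<And>z. z \<in> Om - A \<Longrightarrow> survive 1 z \<le> q"
  shows "x \<in> Om - A \<Longrightarrow> survive (real k) x \<le> q ^ k"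
proof (induction k arbitrary: x)
  case 0
  then show ?case by (simp add: survive_0)
next
  case (Suc k)
  have "survive (real k + 1) x = (\<Sum>z\<in>Om - A. mexp (Om - A) (generator Om R) (real k) x z * survive 1 z)"
    by (rule survive_add[OF Suc.prems])
  also have "\<dots> \<le> (\<Sum>z\<in>Om - A. mexp (Om - A) (generator Om R) (real k) x z * q)"
    by (intro sum_mono mult_left_mono one killed_mexp_nonneg Suc.prems) auto
  also have "\<dots> = survive (real k) x * q" by (simp add: survive_def sum_distrib_right)
  also have "\<dots> \<le> q ^ k * q" using Suc.IH[OF Suc.prems] q by (rule mult_right_mono)
  finally show ?case by (simp add: algebra_simps)
qed

end

section \<open>Hitting a rare set\<close>

lemma Inf_sublevel_crossing:
  fixes f :: "real \<Rightarrow> real" and c L :: real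
  defines "T \<equiv> Inf {t. 0 < t \<and> f t < c}"
  assumes lip: "\<And>a b. 0 \<le> a \<Longrightarrow> a \<le> b \<Longrightarrow> f a - f b \<le> (b - a) * L" and L: "0 \<le> L"
    and f0: "c \<le> f 0" and below: "\<exists>t>0. f t < c"
  shows "0 \<le> T" "f T = c"
proof -
  define Z where "Z = {t. 0 < t \<and> f t < c}"
  have Z: "Z \<noteq> {}" "bdd_below Z" using below by (auto simp: Z_def intro: bdd_belowI[of _ 0])
  show T0: "0 \<le> T" unfolding T_def by (rule cInf_greatest) (use Z in \<open>auto simp: Z_def\<close>)
  have small: "\<epsilon> * L \<le> e" if "0 < e" "0 \<le> \<epsilon>" "\<epsilon> \<le> e / (L + 1)" for e \<epsilon>
  proof -
    have "\<epsilon> * L \<le> e / (L + 1) * L" using that L by (intro mult_right_mono)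
    also have "\<dots> \<le> e" using that L by (simp add: field_simps)
    finally show ?thesis .
  qed
  have "f T \<le> c + e" if e: "0 < e" for e
  proof -
    obtain t where t: "t \<in> Z" "t < T + e / (L + 1)"
      using cInf_less_iff[OF Z, of "T + e / (L + 1)"] e L by (auto simp: T_def Z_def)
    have "T \<le> t" unfolding T_def Z_def[symmetric] by (rule cInf_lower[OF t(1) Z(2)])
    then have "f T - f t \<le> e" using lip[OF T0] small[OF e, of "t - T"] t(2) by force
    then show ?thesis using t(1) by (simp add: Z_def)
  qed
  moreover have "c \<le> f T + e" if e: "0 < e" for e
  proof (cases "T = 0")
    case True
    then show ?thesis using f0 e by simp
  next
    case False
    define t where "t = T - min (T / 2) (e / (L + 1))"
    have t: "0 < t" "t < T" using False T0 e L by (auto simp: t_def)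
    have "t \<notin> Z"
      using cInf_lower[OF _ Z(2), of t] t(2) by (auto simp: T_def Z_def)
    then have "c \<le> f t" using t by (simp add: Z_def)
    moreover have "f t - f T \<le> e"
      using lip[of t T] small[OF e, of "T - t"] t by (auto simp: t_def)
    ultimately show ?thesis by simp
  qed
  ultimately show "f T = c" by (meson antisym field_le_epsilon)
qed

locale hitting_setting =
  killed_chain Om R nu A + irreducible_stationary_chain Om R nu
  for Om :: "'a set" and R :: "'a \<Rightarrow> 'a \<Rightarrow> real" and nu :: "'a \<Rightarrow> real" and A :: "'a set" +
  assumes A_nonempty: "A \<noteq> {}"
begin

lemma survival_less_somewhere: "\<exists>t>0. S t < exp (-1)"
proof -
  obtain \<delta> where \<delta>: "0 < \<delta>" "\<And>x y. x \<in> Om \<Longrightarrow> y \<in> Om \<Longrightarrow> \<delta> \<le> P 1 x y"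
    using doeblin_minorization by blast
  obtain a where a: "a \<in> Om" "a \<in> A" using A_nonempty A_subset by auto
  have \<delta>1: "\<delta> \<le> 1" using \<delta>(2)[OF a(1) a(1)] P_le_1[OF a(1) _ a(1), of 1] by simp
  have one: "survive 1 z \<le> 1 - \<delta>" if z: "z \<in> Om - A" for z
  proof -
    have zO: "z \<in> Om" using z by auto
    have "survive 1 z \<le> (\<Sum>y\<in>Om - A. P 1 z y)"
      unfolding survive_def by (intro sum_mono killed_mexp_le_P z) auto
    also have "\<dots> = 1 - (\<Sum>y\<in>A. P 1 z y)"
      using sum.subset_diff[OF A_subset finite_Om, of "P 1 z"] P_row_sum[OF zO] by simp
    also have "\<dots> \<le> 1 - P 1 z a"
      using member_le_sum[of a A "P 1 z"] finite_subset[OF A_subset finite_Om] a P_nonneg[OF zO]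
        A_subset by force
    finally show ?thesis using \<delta>(2)[OF zO a(1)] by simp
  qed
  obtain k where k: "(1 - \<delta>) ^ k < exp (-1)"
    using real_arch_pow_inv[of "exp (-1)" "1 - \<delta>"] \<delta> by auto
  have "S (real k) \<le> (\<Sum>x\<in>Om - A. nu x * (1 - \<delta>) ^ k)"
    unfolding survival_eq
    by (intro sum_mono mult_left_mono survive_nat_le[OF _ one] nu_nonneg) (use \<delta>1 in auto)
  also have "\<dots> \<le> (1 - \<delta>) ^ k"
    unfolding sum_distrib_right[symmetric]
    by (rule mult_left_le_one_le) (use sum_nu_outside_le_1 sum_nu_nonneg \<delta>1 in auto)
  finally have "S (real (Suc k)) < exp (-1)"
    using k survival_antimono[of "real k" "real (Suc k)"] by simp
  then show ?thesis by (intro exI[of _ "real (Suc k)"]) auto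
qed

lemma survival_theta:
  assumes "(\<Sum>x\<in>A. nu x) \<le> 1 - exp (-1)"
  shows "0 \<le> theta Om R nu A" "S (theta Om R nu A) = exp (-1)"
  using Inf_sublevel_crossing[of S flux "exp (-1)"] survival_lipschitz flux_nonneg
    survival_less_somewhere assms
  by (auto simp: theta_def survival_0)

lemma survival_approx_mult:
  assumes K: "0 < K" and a: "0 \<le> a" and b: "0 \<le> b"
  shows "\<bar>S (a + b) - S a * S b\<bar>
           \<le> (1/2) ^ K + real K * mixing_time Om R nu * cap_rate Om R nu A + (\<Sum>x\<in>A. nu x)"
proof (rule field_le_epsilon)
  fix e :: real assume e: "0 < e"
  define cap where "cap = cap_rate Om R nu A"
  have cap: "flux \<le> cap" "0 \<le> cap" using flux_le_cap_rate flux_nonneg by (auto simp: cap_def)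
  define \<delta> where "\<delta> = e / (real K * (cap + 1))"
  have \<delta>: "0 < \<delta>" using e K cap by (simp add: \<delta>_def)
  have "real K * \<delta> * cap = e * (cap / (cap + 1))" using K cap by (simp add: \<delta>_def)
  also have "\<dots> \<le> e" using e cap by (intro mult_left_le) auto
  finally have K\<delta>: "real K * \<delta> * cap \<le> e" .
  obtain T where T: "0 < T" "T < mixing_time Om R nu + \<delta>" "close_to_stationary T (1/2)"
    using close_to_stationary_near_mixing_time[OF \<delta>] .
  obtain k where k: "K = Suc k" using K gr0_conv_Suc by auto
  have D: "close_to_stationary (real K * T) ((1/2) ^ K)"
    using close_to_stationary_mult[OF T(3), of k] by (simp add: k)
  have "real K * T * flux \<le> real K * (mixing_time Om R nu + \<delta>) * cap"
    using T cap flux_nonneg by (intro mult_mono) auto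
  also have "\<dots> \<le> real K * mixing_time Om R nu * cap + e"
    using K\<delta> by (simp add: algebra_simps)
  finally have "real K * T * flux \<le> real K * mixing_time Om R nu * cap + e" .
  then show "\<bar>S (a + b) - S a * S b\<bar>
      \<le> (1/2) ^ K + real K * mixing_time Om R nu * cap_rate Om R nu A + (\<Sum>x\<in>A. nu x) + e"
    using survival_approx_mult_close[OF _ D a b] T(1) by (simp add: cap_def)
qed

end

section \<open>Approximately multiplicative survival functions\<close>

lemma approx_mult_power:
  fixes G :: "real \<Rightarrow> real"
  assumes mult: "\<And>a b. 0 \<le> a \<Longrightarrow> 0 \<le> b \<Longrightarrow> \<bar>G (a + b) - G a * G b\<bar> \<le> e"
    and bounded: "0 \<le> G x" "G x \<le> 1" and x: "0 \<le> x"
  shows "\<bar>G (real (Suc m) * x) - G x ^ Suc m\<bar> \<le> real m * e"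
proof (induction m)
  case 0
  then show ?case by simp
next
  case (Suc m)
  have step: "\<bar>G (real (Suc m) * x + x) - G (real (Suc m) * x) * G x\<bar> \<le> e"
    using x by (intro mult) auto
  have "G (real (Suc m) * x) * G x - G x ^ Suc (Suc m) = G x * (G (real (Suc m) * x) - G x ^ Suc m)"
    by (simp add: algebra_simps)
  then have "\<bar>G (real (Suc m) * x) * G x - G x ^ Suc (Suc m)\<bar>
      = G x * \<bar>G (real (Suc m) * x) - G x ^ Suc m\<bar>"
    using bounded by (simp add: abs_mult)
  also have "\<dots> \<le> 1 * (real m * e)"
    using bounded Suc.IH by (intro mult_mono) auto
  finally have IH: "\<bar>G (real (Suc m) * x) * G x - G x ^ Suc (Suc m)\<bar> \<le> real m * e" by simp
  have "real (Suc (Suc m)) * x = real (Suc m) * x + x" by (simp add: algebra_simps)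
  then show ?case using step IH by (simp add: abs_le_iff algebra_simps)
qed

lemma exp_minus_diff_le:
  fixes x y :: real
  assumes "0 \<le> x" "x \<le> y"
  shows "exp (- x) - exp (- y) \<le> y - x"
proof -
  have "exp (- x) - exp (- y) = exp (- x) * (1 - exp (x - y))"
    by (simp add: algebra_simps flip: exp_add)
  also have "\<dots> \<le> 1 - exp (x - y)"
    using assms by (intro mult_left_le_one_le) auto
  also have "\<dots> \<le> y - x" using exp_ge_add_one_self[of "x - y"] by linarith
  finally show ?thesis .
qed

text \<open>G N a stands for P_nu[H_N > a theta_N].\<close>

locale approx_memoryless =
  fixes G :: "nat \<Rightarrow> real \<Rightarrow> real"
  assumes at_1: "\<forall>\<^sub>F N in sequentially. G N 1 = exp (-1)"
    and bounded: "\<forall>\<^sub>F N in sequentially. \<forall>a\<ge>0. 0 \<le> G N a \<and> G N a \<le> 1"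
    and antimono: "\<forall>\<^sub>F N in sequentially. \<forall>a b. 0 \<le> a \<longrightarrow> a \<le> b \<longrightarrow> G N b \<le> G N a"
    and approx_mult: "\<And>\<epsilon>. 0 < \<epsilon> \<Longrightarrow>
      \<forall>\<^sub>F N in sequentially. \<forall>a\<ge>0. \<forall>b\<ge>0. \<bar>G N (a + b) - G N a * G N b\<bar> \<le> \<epsilon>"
begin

lemma tendsto_power_diff:
  assumes x: "0 \<le> x"
  shows "(\<lambda>N. G N (real (Suc m) * x) - G N x ^ Suc m) \<longlonglongrightarrow> 0"
proof (rule tendstoI)
  fix e :: real assume e: "0 < e"
  have "\<forall>\<^sub>F N in sequentially. \<forall>a\<ge>0. \<forall>b\<ge>0. \<bar>G N (a + b) - G N a * G N b\<bar> \<le> e / (real m + 1)"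
    using e by (intro approx_mult) simp
  then show "\<forall>\<^sub>F N in sequentially. dist (G N (real (Suc m) * x) - G N x ^ Suc m) 0 < e"
    using bounded
  proof eventually_elim
    case (elim N)
    have "\<bar>G N (real (Suc m) * x) - G N x ^ Suc m\<bar> \<le> real m * (e / (real m + 1))"
      by (rule approx_mult_power) (use elim x in auto)
    also have "\<dots> < e" using e by (simp add: field_simps)
    finally show ?case by (simp add: dist_real_def)
  qed
qed

lemma tendsto_at_0: "(\<lambda>N. G N 0) \<longlonglongrightarrow> 1"
proof -
  have diff: "(\<lambda>N. G N (1 + 0) - G N 1 * G N 0) \<longlonglongrightarrow> 0"
  proof (rule tendstoI)
    fix e :: real assume "0 < e"
    then have "\<forall>\<^sub>F N in sequentially. \<forall>a\<ge>0. \<forall>b\<ge>0. \<bar>G N (a + b) - G N a * G N b\<bar> \<le> e / 2"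
      by (intro approx_mult) simp
    then show "\<forall>\<^sub>F N in sequentially. dist (G N (1 + 0) - G N 1 * G N 0) 0 < e"
    proof eventually_elim
      case (elim N)
      then have "\<bar>G N (1 + 0) - G N 1 * G N 0\<bar> \<le> e / 2" using elim[rule_format, of 1 0] by simp
      then show ?case using \<open>0 < e\<close> by (simp add: dist_real_def)
    qed
  qed
  have "(\<lambda>N. 1 - (G N (1 + 0) - G N 1 * G N 0) / exp (-1)) \<longlonglongrightarrow> 1 - 0 / exp (-1)"
    by (intro tendsto_intros diff) simp
  moreover have "\<forall>\<^sub>F N in sequentially. 1 - (G N (1 + 0) - G N 1 * G N 0) / exp (-1) = G N 0"
    using at_1 by eventually_elim (simp add: field_simps)
  ultimately show ?thesis by (simp add: Lim_transform_eventually)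
qed

lemma tendsto_at_unit_fraction:
  "(\<lambda>N. G N (1 / real (Suc m))) \<longlonglongrightarrow> exp (- (1 / real (Suc m)))"
proof -
  define q where "q = Suc m"
  have q: "0 < q" by (simp add: q_def)
  have "(\<lambda>N. G N (real q * (1 / real q)) - G N (1 / real q) ^ q) \<longlonglongrightarrow> 0"
    unfolding q_def by (rule tendsto_power_diff) simp
  then have "(\<lambda>N. exp (-1) - (G N 1 - G N (1 / real q) ^ q)) \<longlonglongrightarrow> exp (-1) - 0"
    using q by (intro tendsto_intros) simp
  moreover have "\<forall>\<^sub>F N in sequentially. exp (-1) - (G N 1 - G N (1 / real q) ^ q) = G N (1 / real q) ^ q"
    using at_1 by eventually_elim simp
  ultimately have "(\<lambda>N. G N (1 / real q) ^ q) \<longlonglongrightarrow> exp (-1)"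
    by (simp add: Lim_transform_eventually)
  then have "(\<lambda>N. root q (G N (1 / real q) ^ q)) \<longlonglongrightarrow> root q (exp (-1))"
    by (rule tendsto_real_root)
  moreover have "\<forall>\<^sub>F N in sequentially. root q (G N (1 / real q) ^ q) = G N (1 / real q)"
    using bounded by eventually_elim (simp add: q real_root_power_cancel)
  moreover have "root q (exp (-1)) = exp (- (1 / real q))"
    using q by (simp add: root_powr_inverse exp_powr_real)
  ultimately show ?thesis unfolding q_def by (simp add: Lim_transform_eventually)
qed

lemma tendsto_at_fraction:
  "(\<lambda>N. G N (real p / real (Suc m))) \<longlonglongrightarrow> exp (- (real p / real (Suc m)))"
proof (cases p)
  case 0
  then show ?thesis using tendsto_at_0 by simp
next
  case (Suc k)
  have "(\<lambda>N. (G N (real (Suc k) * (1 / real (Suc m))) - G N (1 / real (Suc m)) ^ Suc k)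
        + G N (1 / real (Suc m)) ^ Suc k) \<longlonglongrightarrow> 0 + exp (- (1 / real (Suc m))) ^ Suc k"
    by (intro tendsto_add tendsto_power_diff tendsto_power tendsto_at_unit_fraction) simp
  moreover have "exp (- (1 / real (Suc m))) ^ Suc k = exp (real (Suc k) * (- (1 / real (Suc m))))"
    by (rule exp_of_nat_mult[symmetric])
  ultimately show ?thesis using Suc by simp
qed

text \<open>G N t is squeezed between G N at p/(m+1) and at (p+1)/(m+1).\<close>

lemma tendsto_exp:
  assumes t: "0 \<le> t"
  shows "(\<lambda>N. G N t) \<longlonglongrightarrow> exp (- t)"
proof (rule tendstoI)
  fix e :: real assume e: "0 < e"
  obtain m :: nat where "2 / e < real m" using reals_Archimedean2 by blast
  then have q: "1 / real (Suc m) < e / 2"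
    using e by (simp add: field_simps)
  define p where "p = nat \<lfloor>t * real (Suc m)\<rfloor>"
  have lo: "real p / real (Suc m) \<le> t" and hi: "t \<le> real (Suc p) / real (Suc m)"
    using t by (simp_all add: p_def field_simps) linarith
  have gap: "real (Suc p) / real (Suc m) - real p / real (Suc m) = 1 / real (Suc m)"
    by (simp add: diff_divide_distrib[symmetric])
  have upper: "exp (- (real p / real (Suc m))) \<le> exp (- t) + 1 / real (Suc m)"
    using exp_minus_diff_le[of "real p / real (Suc m)" t] lo gap hi by simp
  have lower: "exp (- t) - 1 / real (Suc m) \<le> exp (- (real (Suc p) / real (Suc m)))"
    using exp_minus_diff_le[of t "real (Suc p) / real (Suc m)"] gap hi lo t by simp
  have "\<forall>\<^sub>F N in sequentially.
      dist (G N (real p / real (Suc m))) (exp (- (real p / real (Suc m)))) < e / 2"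
    "\<forall>\<^sub>F N in sequentially.
      dist (G N (real (Suc p) / real (Suc m))) (exp (- (real (Suc p) / real (Suc m)))) < e / 2"
    using tendstoD[OF tendsto_at_fraction[of p m]] tendstoD[OF tendsto_at_fraction[of "Suc p" m]] e
    by (meson half_gt_zero)+
  then show "\<forall>\<^sub>F N in sequentially. dist (G N t) (exp (- t)) < e"
    using antimono
  proof eventually_elim
    case (elim N)
    have "G N t \<le> G N (real p / real (Suc m))" "G N (real (Suc p) / real (Suc m)) \<le> G N t"
      using elim(3) lo hi t by auto
    then show ?case
      using elim(1,2) upper lower q unfolding dist_real_def abs_less_iff by linarith
  qed
qed

end

section \<open>Exponential law of the hitting time\<close>

lemma eventually_survival_approx_mult:
  fixes Om :: "nat \<Rightarrow> 'a set" and R :: "nat \<Rightarrow> 'a \<Rightarrow> 'a \<Rightarrow> real"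
    and nu :: "nat \<Rightarrow> 'a \<Rightarrow> real" and A :: "nat \<Rightarrow> 'a set"
  assumes setting: "\<forall>\<^sub>F N in sequentially. hitting_setting (Om N) (R N) (nu N) (A N)"
    and nuA: "(\<lambda>N. \<Sum>x\<in>A N. nu N x) \<longlonglongrightarrow> 0"
    and mix: "(\<lambda>N. mixing_time (Om N) (R N) (nu N) * cap_rate (Om N) (R N) (nu N) (A N)) \<longlonglongrightarrow> 0"
    and e: "0 < \<epsilon>"
  shows "\<forall>\<^sub>F N in sequentially. \<forall>a\<ge>0. \<forall>b\<ge>0.
    \<bar>survival (Om N) (R N) (nu N) (A N) (a + b)
      - survival (Om N) (R N) (nu N) (A N) a * survival (Om N) (R N) (nu N) (A N) b\<bar> \<le> \<epsilon>"
proof -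
  obtain k where k: "(1/2::real) ^ k < \<epsilon> / 3" using real_arch_pow_inv[of "\<epsilon> / 3" "1/2"] e by auto
  have "(1/2::real) ^ Suc k \<le> (1/2) ^ k" by (rule power_decreasing) auto
  with k have K: "(1/2::real) ^ Suc k < \<epsilon> / 3" by linarith
  have "(\<lambda>N. real (Suc k) * (mixing_time (Om N) (R N) (nu N) * cap_rate (Om N) (R N) (nu N) (A N)))
      \<longlonglongrightarrow> 0"
    using tendsto_mult_right_zero[OF mix] .
  from order_tendstoD(2)[OF this, of "\<epsilon> / 3"]
  have "\<forall>\<^sub>F N in sequentially.
      real (Suc k) * (mixing_time (Om N) (R N) (nu N) * cap_rate (Om N) (R N) (nu N) (A N)) < \<epsilon> / 3"
    using e by simp
  moreover have "\<forall>\<^sub>F N in sequentially. (\<Sum>x\<in>A N. nu N x) < \<epsilon> / 3"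
    using e by (intro order_tendstoD(2)[OF nuA]) auto
  ultimately show ?thesis
    using setting
  proof eventually_elim
    case (elim N)
    show ?case
    proof (intro allI impI)
      fix a b :: real assume "0 \<le> a" "0 \<le> b"
      then show "\<bar>survival (Om N) (R N) (nu N) (A N) (a + b) - survival (Om N) (R N) (nu N) (A N) a
          * survival (Om N) (R N) (nu N) (A N) b\<bar> \<le> \<epsilon>"
        using hitting_setting.survival_approx_mult[OF elim(3), of "Suc k" a b] elim(1,2) K
        by (simp add: mult.assoc)
    qed
  qed
qed

lemma approx_memoryless_scaled_survival:
  fixes Om :: "nat \<Rightarrow> 'a set" and R :: "nat \<Rightarrow> 'a \<Rightarrow> 'a \<Rightarrow> real"
    and nu :: "nat \<Rightarrow> 'a \<Rightarrow> real" and A :: "nat \<Rightarrow> 'a set"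
  assumes hitting: "\<forall>\<^sub>F N in sequentially. hitting_setting (Om N) (R N) (nu N) (A N)"
    and nuA: "(\<lambda>N. \<Sum>x\<in>A N. nu N x) \<longlonglongrightarrow> 0"
    and mix: "(\<lambda>N. mixing_time (Om N) (R N) (nu N) * cap_rate (Om N) (R N) (nu N) (A N)) \<longlonglongrightarrow> 0"
  shows "approx_memoryless
    (\<lambda>N a. survival (Om N) (R N) (nu N) (A N) (a * theta (Om N) (R N) (nu N) (A N)))"
proof -
  let ?S = "\<lambda>N. survival (Om N) (R N) (nu N) (A N)" and ?\<theta> = "\<lambda>N. theta (Om N) (R N) (nu N) (A N)"
  have "\<forall>\<^sub>F N in sequentially. (\<Sum>x\<in>A N. nu N x) \<le> 1 - exp (-1)"
    using order_tendstoD(2)[OF nuA, of "1 - exp (-1)"] by (auto elim: eventually_mono)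
  with hitting have setting: "\<forall>\<^sub>F N in sequentially. hitting_setting (Om N) (R N) (nu N) (A N)
      \<and> 0 \<le> ?\<theta> N \<and> ?S N (?\<theta> N) = exp (-1)"
    by eventually_elim (simp add: hitting_setting.survival_theta)
  show ?thesis
  proof
    show "\<forall>\<^sub>F N in sequentially. ?S N (1 * ?\<theta> N) = exp (-1)"
      using setting by eventually_elim simp
    show "\<forall>\<^sub>F N in sequentially. \<forall>a\<ge>0. 0 \<le> ?S N (a * ?\<theta> N) \<and> ?S N (a * ?\<theta> N) \<le> 1"
      using setting
    proof eventually_elim
      case (elim N)
      then interpret hitting_setting "Om N" "R N" "nu N" "A N" by simp
      show ?case using elim by (simp add: survival_nonneg survival_le_1)
    qed
    show "\<forall>\<^sub>F N in sequentially. \<forall>a b. 0 \<le> a \<longrightarrow> a \<le> b \<longrightarrow> ?S N (b * ?\<theta> N) \<le> ?S N (a * ?\<theta> N)"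
      using setting
    proof eventually_elim
      case (elim N)
      then interpret hitting_setting "Om N" "R N" "nu N" "A N" by simp
      show ?case using elim by (auto intro: survival_antimono mult_right_mono)
    qed
    show "\<forall>\<^sub>F N in sequentially. \<forall>a\<ge>0. \<forall>b\<ge>0.
        \<bar>?S N ((a + b) * ?\<theta> N) - ?S N (a * ?\<theta> N) * ?S N (b * ?\<theta> N)\<bar> \<le> \<epsilon>" if "0 < \<epsilon>" for \<epsilon>
      using eventually_survival_approx_mult[OF hitting nuA mix that] setting
      by eventually_elim (simp add: distrib_right)
  qed
qed

theorem lemma3p4:
  fixes Om :: "nat \<Rightarrow> 'a set" and R :: "nat \<Rightarrow> 'a \<Rightarrow> 'a \<Rightarrow> real"
    and nu :: "nat \<Rightarrow> 'a \<Rightarrow> real" and A :: "nat \<Rightarrow> 'a set"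
  assumes rates: "\<And>N. N \<ge> 1 \<Longrightarrow> valid_rates (Om N) (R N)"
    and irred: "\<And>N. N \<ge> 1 \<Longrightarrow> irreducible_chain (Om N) (R N)"
    and stat: "\<And>N. N \<ge> 1 \<Longrightarrow> stationary (Om N) (R N) (nu N)"
    and A_sub: "\<And>N. N \<ge> 1 \<Longrightarrow> A N \<subseteq> Om N"
    and A_ne: "\<And>N. N \<ge> 1 \<Longrightarrow> A N \<noteq> {}"
    and nuA: "(\<lambda>N. \<Sum>x\<in>A N. nu N x) \<longlonglongrightarrow> 0"
    and mix: "(\<lambda>N. mixing_time (Om N) (R N) (nu N) * cap_rate (Om N) (R N) (nu N) (A N))
                \<longlonglongrightarrow> 0"
  shows "\<forall>t \<ge> 0. (\<lambda>N. survival (Om N) (R N) (nu N) (A N)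
                       (t * theta (Om N) (R N) (nu N) (A N))) \<longlonglongrightarrow> exp (- t)"
proof -
  have "\<forall>\<^sub>F N in sequentially. hitting_setting (Om N) (R N) (nu N) (A N)"
    using eventually_ge_at_top[of 1]
  proof eventually_elim
    case (elim N)
    show ?case by unfold_locales (use elim rates irred stat A_sub A_ne in auto)
  qed
  then interpret approx_memoryless
    "\<lambda>N a. survival (Om N) (R N) (nu N) (A N) (a * theta (Om N) (R N) (nu N) (A N))"
    using nuA mix by (rule approx_memoryless_scaled_survival)
  show ?thesis using tendsto_exp by blast
qed

end
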